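(* Let $K$ be a field, $G(V,E)$ a finite simple graph, and $\mathfrak{g}$ the $2$-step nilpotent graph Lie algebra associated to $G(V,E)$. Then $$\chi(\mathfrak{g})=\dim\mathfrak{g}-2\nu(G(V,E))=|V|+|E|-2\nu(G(V,E)).$$
   Context: Graph Lie algebra: let $U$ be the $K$-vector space with basis $V$, and $W\subseteq\Lambda^2(U)$ the subspace spanned by $\{v_1\wedge v_2\mid \{v_1,v_2\}\in E\}$. The Lie algebra $\mathfrak{g}$ has underlying space $U\oplus W$ (so $\dim\mathfrak{g}=|V|+|E|$), with $W$ central, and for $v_1,v_2\in V$: $[v_1,v_2]=v_1\wedge v_2$ if $\{v_1,v_2\}\in E$ and $[v_1,v_2]=0$ otherwise. A matching of $G(V,E)$ is a set $S\subseteq E$ of edges such that each vertex lies in at most one edge of $S$; the matching number $\nu(G(V,E))$ is the maximum number of edges in a matching. For a finite-dimensional Lie algebra $\mathfrak{h}$ and $\ell\in\mathfrak{h}^*$, $\mathfrak{h}(\ell)=\{y\in\mathfrak{h}\mid\ell([x,y])=0\ \forall x\in\mathfrak{h}\}$ and the index is $\chi(\mathfrak{h})=\min_{\ell\in\mathfrak{h}^*}\dim\mathfrak{h}(\ell)$. *)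

theory Defs
  imports Complex_Main "HOL-Library.Function_Algebras"
begin

definition simple_graph :: "'v set \<Rightarrow> 'v set set \<Rightarrow> bool" where
  "simple_graph V E \<longleftrightarrow> finite V \<and> (\<forall>e\<in>E. \<exists>a b. a \<in> V \<and> b \<in> V \<and> a \<noteq> b \<and> e = {a, b})"

definition matching :: "'v set set \<Rightarrow> 'v set set \<Rightarrow> bool" where
  "matching E S \<longleftrightarrow> S \<subseteq> E \<and> (\<forall>e1\<in>S. \<forall>e2\<in>S. e1 \<noteq> e2 \<longrightarrow> e1 \<inter> e2 = {})"

definition matching_number :: "'v set set \<Rightarrow> nat" where
  "matching_number E = Max {card S | S. matching E S}"

text \<open>Vectors of the graph Lie algebra: coordinate functions on the basis
  V \<union> E (vertices as Inl, edges as Inr), vanishing off that basis.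
  The basis vector of W for an edge {a,b} with a < b is a \<and> b.\<close>

definition scal :: "'k::field \<Rightarrow> ('i \<Rightarrow> 'k) \<Rightarrow> ('i \<Rightarrow> 'k)" where
  "scal c f = (\<lambda>i. c * f i)"

definition graph_lie_carrier :: "'v set \<Rightarrow> 'v set set \<Rightarrow> (('v + 'v set) \<Rightarrow> 'k::field) set" where
  "graph_lie_carrier V E = {x. \<forall>i. i \<notin> Inl ` V \<union> Inr ` E \<longrightarrow> x i = 0}"

definition graph_lie_bracket ::
  "'v::linorder set \<Rightarrow> 'v set set \<Rightarrow> (('v + 'v set) \<Rightarrow> 'k::field) \<Rightarrow> (('v + 'v set) \<Rightarrow> 'k) \<Rightarrow> (('v + 'v set) \<Rightarrow> 'k)" where
  "graph_lie_bracket V E x y = (\<lambda>i. case i of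
      Inl v \<Rightarrow> 0
    | Inr e \<Rightarrow> (if e \<in> E then
                  x (Inl (Min e)) * y (Inl (Max e)) - x (Inl (Max e)) * y (Inl (Min e))
                else 0))"

definition graph_lie_dim :: "'v set \<Rightarrow> 'v set set \<Rightarrow> 'k::field itself \<Rightarrow> nat" where
  "graph_lie_dim V E _ = vector_space.dim (scal :: 'k \<Rightarrow> _) (graph_lie_carrier V E :: (('v + 'v set) \<Rightarrow> 'k) set)"

definition lin_functional :: "('i \<Rightarrow> 'k::field) set \<Rightarrow> (('i \<Rightarrow> 'k) \<Rightarrow> 'k) \<Rightarrow> bool" where
  "lin_functional S l \<longleftrightarrow> (\<forall>x\<in>S. \<forall>y\<in>S. l (x + y) = l x + l y) \<and> (\<forall>c. \<forall>x\<in>S. l (scal c x) = c * l x)"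

definition stabilizer ::
  "'v::linorder set \<Rightarrow> 'v set set \<Rightarrow> ((('v + 'v set) \<Rightarrow> 'k::field) \<Rightarrow> 'k) \<Rightarrow> (('v + 'v set) \<Rightarrow> 'k) set" where
  "stabilizer V E l = {y \<in> graph_lie_carrier V E. \<forall>x \<in> graph_lie_carrier V E. l (graph_lie_bracket V E x y) = 0}"

definition lie_index :: "'v::linorder set \<Rightarrow> 'v set set \<Rightarrow> 'k::field itself \<Rightarrow> nat" where
  "lie_index V E _ = Min {vector_space.dim (scal :: 'k \<Rightarrow> _) (stabilizer V E l) | l :: (('v + 'v set) \<Rightarrow> 'k) \<Rightarrow> 'k.
                         lin_functional (graph_lie_carrier V E) l}"

end

(*
  For a functional l, the form (x, y) |-> l([x, y]) only involves the vertex coordinates; its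
  Gram matrix A is alternating and supported on the edges, and g(l) is the radical of the form,
  of dimension |V| + |E| - rank A.  The functional summing the edge coordinates of a maximum
  matching has rank exactly 2 nu.  Conversely rank A <= 2 nu, by induction on |V|: a vertex
  covered by every maximum matching can be deleted, losing one from nu and at most one from the
  rank.  Otherwise every vertex is missed by some maximum matching, and by Gallai's lemma the
  |V| - 2 nu vertices missed by one of them lie in distinct odd components; an alternating
  matrix of odd size is singular, so each component carries its own kernel vector.
*)

theory Submission
  imports Defs "HOL-Library.Disjoint_Sets"
begin

section \<open>Finitely supported coordinate vectors\<close>

interpretation VS: vector_space "scal :: 'k::field \<Rightarrow> ('i \<Rightarrow> 'k) \<Rightarrow> ('i \<Rightarrow> 'k)"
  by unfold_locales (auto simp: scal_def algebra_simps fun_eq_iff)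

lemma scal_apply [simp]: "scal c f i = c * f i"
  by (simp add: scal_def)

lemma sum_fun_apply: "(sum g F :: 'i \<Rightarrow> 'k::field) i = (\<Sum>y\<in>F. g y i)"
  by (induction F rule: infinite_finite_induct) auto

definition supported_on :: "'i set \<Rightarrow> ('i \<Rightarrow> 'k::zero) set" where
  "supported_on I = {y. \<forall>i. i \<notin> I \<longrightarrow> y i = 0}"

definition unit_vec :: "'i \<Rightarrow> 'i \<Rightarrow> 'k::field" where
  "unit_vec i = (\<lambda>j. if j = i then 1 else 0)"

lemma graph_lie_carrier_eq: "graph_lie_carrier V E = supported_on (Inl ` V \<union> Inr ` E)"
  by (simp add: graph_lie_carrier_def supported_on_def)

lemma unit_vec_in_supported_on: "i \<in> I \<Longrightarrow> unit_vec i \<in> supported_on I"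
  by (simp add: supported_on_def unit_vec_def)

lemma independent_if_private_coordinates:
  fixes F :: "('i \<Rightarrow> 'k::field) set"
  assumes "finite F" and "\<And>f. f \<in> F \<Longrightarrow> \<exists>i. f i \<noteq> 0 \<and> (\<forall>g\<in>F. g \<noteq> f \<longrightarrow> g i = 0)"
  shows "VS.independent F"
proof (rule VS.independent_if_scalars_zero[OF assms(1)])
  fix u :: "('i \<Rightarrow> 'k) \<Rightarrow> 'k" and f
  assume sum: "(\<Sum>g\<in>F. scal (u g) g) = 0" and f: "f \<in> F"
  obtain i where i: "f i \<noteq> 0" "\<forall>g\<in>F. g \<noteq> f \<longrightarrow> g i = 0" using assms(2)[OF f] by blast
  have "0 = (\<Sum>g\<in>F. scal (u g) g) i" using sum by simp
  also have "\<dots> = (\<Sum>g\<in>F. u g * g i)" by (simp add: sum_fun_apply)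
  also have "\<dots> = u f * f i"
    using i f assms(1) by (subst sum.remove[of _ f]) (auto intro!: sum.neutral)
  finally show "u f = 0" using i by simp
qed

lemma supported_on_subset_span:
  fixes I :: "'i set"
  assumes "finite I"
  shows "(supported_on I :: ('i \<Rightarrow> 'k::field) set) \<subseteq> VS.span (unit_vec ` I)"
proof
  fix y :: "'i \<Rightarrow> 'k" assume y: "y \<in> supported_on I"
  have "y = (\<Sum>i\<in>I. scal (y i) (unit_vec i))"
  proof
    fix j
    have "(\<Sum>i\<in>I. scal (y i) (unit_vec i)) j = (\<Sum>i\<in>I. if j = i then y i else 0)"
      unfolding sum_fun_apply by (rule sum.cong) (auto simp: unit_vec_def)
    also have "\<dots> = y j"
      using assms y by (cases "j \<in> I") (auto simp: supported_on_def sum.delta)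
    finally show "y j = (\<Sum>i\<in>I. scal (y i) (unit_vec i)) j" ..
  qed
  also have "\<dots> \<in> VS.span (unit_vec ` I)"
    by (intro VS.span_sum VS.span_scale VS.span_base) auto
  finally show "y \<in> VS.span (unit_vec ` I)" .
qed

lemma dim_supported_on:
  assumes "finite I"
  shows "VS.dim (supported_on I :: ('i \<Rightarrow> 'k::field) set) = card I"
proof (rule VS.dim_unique[of "unit_vec ` I"])
  show "unit_vec ` I \<subseteq> (supported_on I :: ('i \<Rightarrow> 'k) set)"
    using unit_vec_in_supported_on by (rule image_subsetI)
  show "supported_on I \<subseteq> VS.span (unit_vec ` I :: ('i \<Rightarrow> 'k) set)"
    by (rule supported_on_subset_span[OF assms])
  show "VS.independent (unit_vec ` I :: ('i \<Rightarrow> 'k) set)"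
    using assms by (intro independent_if_private_coordinates) (auto simp: unit_vec_def)
  have "inj_on (unit_vec :: 'i \<Rightarrow> 'i \<Rightarrow> 'k) I"
    by (auto simp: inj_on_def unit_vec_def fun_eq_iff)
  then show "card (unit_vec ` I :: ('i \<Rightarrow> 'k) set) = card I"
    by (simp add: card_image)
qed

lemma subspace_supported_on: "VS.subspace (supported_on I :: ('i \<Rightarrow> 'k::field) set)"
  unfolding VS.subspace_def supported_on_def by simp

lemma supported_on_Diff_iff:
  "y \<in> supported_on (I - J) \<longleftrightarrow> y \<in> supported_on I \<and> (\<forall>j\<in>J. y j = 0)"
  unfolding supported_on_def by blast

text \<open>The ambient space of functions is infinite-dimensional, so the library's
  dimension bounds for finite-dimensional spaces are replaced by a finite spanning set.\<close>

lemma card_le_dim: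
  fixes T B :: "('i \<Rightarrow> 'k::field) set"
  assumes "VS.independent F" "F \<subseteq> T" "T \<subseteq> VS.span B" "finite B"
  shows "card F \<le> VS.dim T"
proof -
  obtain C where C: "F \<subseteq> C" "C \<subseteq> T" "VS.independent C" "T \<subseteq> VS.span C"
    using VS.maximal_independent_subset_extend[OF assms(2,1)] by blast
  have "finite C" using VS.independent_span_bound[OF assms(4) C(3)] C(2) assms(3) by (meson order_trans)
  moreover have "card C = VS.dim T" using VS.basis_card_eq_dim C by blast
  ultimately show ?thesis using card_mono[OF _ C(1)] by simp
qed

lemma dim_mono_finite_span:
  fixes S T B :: "('i \<Rightarrow> 'k::field) set"
  assumes "S \<subseteq> T" "T \<subseteq> VS.span B" "finite B"
  shows "VS.dim S \<le> VS.dim T"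
proof -
  obtain F where F: "F \<subseteq> S" "VS.independent F" "S \<subseteq> VS.span F" "card F = VS.dim S"
    by (rule VS.basis_exists)
  have "card F \<le> VS.dim T" by (rule card_le_dim[OF F(2) order_trans[OF F(1) assms(1)] assms(2,3)])
  then show ?thesis using F(4) by simp
qed

lemma card_le_dim_if_disjoint_supports:
  fixes f :: "'j \<Rightarrow> 'i \<Rightarrow> 'k::field"
  assumes "finite J" "f ` J \<subseteq> T" "T \<subseteq> VS.span B" "finite B"
    and nonzero: "\<And>j. j \<in> J \<Longrightarrow> f j \<noteq> 0"
    and supp: "\<And>j. j \<in> J \<Longrightarrow> f j \<in> supported_on (S j)" and "disjoint_family_on S J"
  shows "card J \<le> VS.dim T"
proof -
  have vanish: "f j' i = 0" if "j \<in> J" "j' \<in> J" "j \<noteq> j'" "f j i \<noteq> 0" for j j' i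
    using that supp \<open>disjoint_family_on S J\<close>
    unfolding supported_on_def disjoint_family_on_def by blast
  have "\<exists>i. f j i \<noteq> 0" if "j \<in> J" for j
    using nonzero[OF that] by (auto simp: fun_eq_iff)
  then obtain p where p: "\<And>j. j \<in> J \<Longrightarrow> f j (p j) \<noteq> 0" by metis
  have inj: "inj_on f J"
  proof (rule inj_onI)
    fix j j' assume "j \<in> J" "j' \<in> J" "f j = f j'"
    then show "j = j'" using p vanish by metis
  qed
  have "VS.independent (f ` J)"
  proof (rule independent_if_private_coordinates)
    fix g assume "g \<in> f ` J"
    then obtain j where "j \<in> J" "g = f j" by blast
    then show "\<exists>i. g i \<noteq> 0 \<and> (\<forall>h\<in>f ` J. h \<noteq> g \<longrightarrow> h i = 0)"
      using p vanish by blast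
  qed (use assms(1) in simp)
  then have "card (f ` J) \<le> VS.dim T" using card_le_dim assms(2-4) by blast
  then show ?thesis using card_image[OF inj] by simp
qed

lemma dim_le_dim_kernel_Suc:
  fixes S B :: "('i \<Rightarrow> 'k::field) set" and \<phi> :: "('i \<Rightarrow> 'k) \<Rightarrow> 'k"
  assumes S: "VS.subspace S" "S \<subseteq> VS.span B" "finite B"
    and add: "\<And>x y. \<phi> (x + y) = \<phi> x + \<phi> y" and scale: "\<And>c x. \<phi> (scal c x) = c * \<phi> x"
  shows "VS.dim S \<le> Suc (VS.dim {x\<in>S. \<phi> x = 0})"
proof -
  obtain F where F: "F \<subseteq> S" "VS.independent F" "S \<subseteq> VS.span F" "card F = VS.dim S"
    by (rule VS.basis_exists)
  obtain C where C: "C \<subseteq> {x\<in>S. \<phi> x = 0}" "VS.independent C" "{x\<in>S. \<phi> x = 0} \<subseteq> VS.span C"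
      "card C = VS.dim {x\<in>S. \<phi> x = 0}"
    by (rule VS.basis_exists)
  have fC: "finite C" using VS.independent_span_bound[OF S(3) C(2)] C(1) S(2) by blast
  show ?thesis
  proof (cases "\<forall>f\<in>F. \<phi> f = 0")
    case True
    then have "F \<subseteq> VS.span C" using F(1) C(3) by blast
    then have "S \<subseteq> VS.span C" using F(3) by (meson VS.span_minimal VS.subspace_span subset_trans)
    then have "VS.dim S \<le> card C" using VS.dim_le_card fC by blast
    then show ?thesis using C(4) by simp
  next
    case False
    then obtain f0 where f0: "f0 \<in> F" "\<phi> f0 \<noteq> 0" by blast
    have "F \<subseteq> VS.span (insert f0 C)"
    proof
      fix f assume f: "f \<in> F"
      define g where "g = f - scal (\<phi> f / \<phi> f0) f0"
      have "\<phi> f = \<phi> g + \<phi> (scal (\<phi> f / \<phi> f0) f0)" unfolding g_def by (metis add diff_add_cancel)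
      then have "\<phi> g = 0" using scale f0(2) by simp
      moreover have "g \<in> S" unfolding g_def using F(1) f f0 S(1)
        by (meson VS.subspace_diff VS.subspace_scale subsetD)
      ultimately have "g \<in> VS.span (insert f0 C)"
        using C(3) VS.span_mono[of C "insert f0 C"] by blast
      then have "g + scal (\<phi> f / \<phi> f0) f0 \<in> VS.span (insert f0 C)"
        by (rule VS.span_add[OF _ VS.span_scale[OF VS.span_base]]) simp
      then show "f \<in> VS.span (insert f0 C)" unfolding g_def by simp
    qed
    then have "S \<subseteq> VS.span (insert f0 C)"
      using F(3) by (meson VS.span_minimal VS.subspace_span subset_trans)
    then have "VS.dim S \<le> card (insert f0 C)" using VS.dim_le_card fC by blast
    also have "\<dots> \<le> Suc (card C)" using fC by (simp add: card_insert_if)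
    finally show ?thesis using C(4) by simp
  qed
qed

section \<open>Matchings and Gallai's lemma\<close>

lemma matching_iff_disjoint: "matching E S \<longleftrightarrow> S \<subseteq> E \<and> disjoint S"
  unfolding matching_def disjoint_def by blast

lemma disjoint_eqI: "disjoint M \<Longrightarrow> e \<in> M \<Longrightarrow> e' \<in> M \<Longrightarrow> x \<in> e \<Longrightarrow> x \<in> e' \<Longrightarrow> e = e'"
  unfolding disjoint_def by blast

lemma disjoint_insert_iff: "disjoint (insert e M) \<longleftrightarrow> disjoint M \<and> (\<forall>e'\<in>M. e' \<noteq> e \<longrightarrow> e \<inter> e' = {})"
  unfolding disjoint_def by blast

lemma Union_Diff_disjoint: "disjoint M \<Longrightarrow> e \<in> M \<Longrightarrow> \<Union>(M - {e}) = \<Union>M - e"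
  unfolding disjoint_def by blast

lemma card_two_other: "card e = 2 \<Longrightarrow> t \<in> e \<Longrightarrow> \<exists>a. a \<noteq> t \<and> e = {t, a}"
  by (auto simp: card_2_iff insert_commute)

lemma card_two_ordered:
  fixes e :: "'a::linorder set"
  assumes "card e = 2"
  obtains a b where "a < b" "e = {a, b}"
  using assms unfolding card_2_iff by (metis insert_commute neqE)

definition alternating_exchange :: "'v set set \<Rightarrow> 'v set set \<Rightarrow> 'v \<Rightarrow> bool" where
  "alternating_exchange M N t \<longleftrightarrow>
     (\<exists>N'. N' \<subseteq> M \<union> N \<and> disjoint N' \<and> card N < card N')
   \<or> (\<exists>M' w. M' \<subseteq> M \<union> N \<and> disjoint M' \<and> card M' = card M \<and> w \<notin> \<Union>M
        \<and> \<Union>M' = insert w (\<Union>M - {t}))"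

text \<open>One step along the alternating path \<open>t, a, b, \<dots>\<close> that starts with the
  \<open>M\<close>-edge \<open>{t, a}\<close> and continues with the \<open>N\<close>-edge \<open>{a, b}\<close>.\<close>

lemma alternating_exchange_step:
  assumes "finite M" "finite N" "disjoint M" "disjoint N"
    and e0: "{t, a} \<in> M" and e1: "{a, b} \<in> N" and "t \<notin> \<Union>N" "a \<noteq> t" "b \<noteq> a" "b \<in> \<Union>M"
    and rest: "alternating_exchange (M - {{t, a}}) (N - {{a, b}}) b"
  shows "alternating_exchange M N t"
proof -
  define M0 where "M0 = M - {{t, a}}"
  define N0 where "N0 = N - {{a, b}}"
  have tM0: "t \<notin> \<Union>M0" and aM0: "a \<notin> \<Union>M0"
    using disjoint_eqI[OF assms(3) _ e0] unfolding M0_def by blast+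
  moreover have "a \<notin> \<Union>N0" using disjoint_eqI[OF assms(4) _ e1] unfolding N0_def by blast
  moreover have "t \<notin> \<Union>N0" using \<open>t \<notin> \<Union>N\<close> unfolding N0_def by blast
  ultimately have fresh: "t \<notin> \<Union>(M0 \<union> N0)" "a \<notin> \<Union>(M0 \<union> N0)" by blast+
  have UM: "\<Union>M = {t, a} \<union> \<Union>M0" using e0 unfolding M0_def by blast
  have cM: "card M = Suc (card M0)" using card_Suc_Diff1[OF assms(1) e0] unfolding M0_def by simp
  have cN: "card N = Suc (card N0)" using card_Suc_Diff1[OF assms(2) e1] unfolding N0_def by simp
  have "b \<noteq> t" using e1 \<open>t \<notin> \<Union>N\<close> by blast
  then have bM0: "b \<in> \<Union>M0" using UM \<open>b \<in> \<Union>M\<close> \<open>b \<noteq> a\<close> by auto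
  have fin: "finite (M0 \<union> N0)" using assms(1,2) unfolding M0_def N0_def by simp
  from rest[unfolded alternating_exchange_def, folded M0_def N0_def] show ?thesis
  proof (elim disjE exE conjE)
    fix N' assume N': "N' \<subseteq> M0 \<union> N0" "disjoint N'" "card N0 < card N'"
    have "{t, a} \<notin> N'" using N'(1) fresh by blast
    moreover have "finite N'" using finite_subset[OF N'(1) fin] .
    ultimately have "card N < card (insert {t, a} N')" using N'(3) cN by simp
    moreover have "disjoint (insert {t, a} N')"
      using N'(1,2) fresh unfolding disjoint_insert_iff by blast
    moreover have "insert {t, a} N' \<subseteq> M \<union> N" using N'(1) e0 unfolding M0_def N0_def by blast
    ultimately show ?thesis
      unfolding alternating_exchange_def by (intro disjI1 exI[of _ "insert {t, a} N'"] conjI)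
  next
    fix M' w assume M': "M' \<subseteq> M0 \<union> N0" "disjoint M'" "card M' = card M0" "w \<notin> \<Union>M0"
      "\<Union>M' = insert w (\<Union>M0 - {b})"
    have "w \<in> \<Union>(M0 \<union> N0)" using M'(1,5) by blast
    then have "w \<noteq> t" and wa: "w \<noteq> a" using fresh by blast+
    then have w: "w \<notin> \<Union>M" using UM M'(4) by simp
    have "w \<noteq> b" using M'(4) bM0 by blast
    then have ab: "a \<notin> \<Union>M'" "b \<notin> \<Union>M'" using M'(1,5) fresh(2) wa by auto
    have "{a, b} \<notin> M'" using ab by blast
    moreover have "finite M'" using finite_subset[OF M'(1) fin] .
    ultimately have "card (insert {a, b} M') = card M" using M'(3) cM by simp
    moreover have "disjoint (insert {a, b} M')"
      using M'(2) ab unfolding disjoint_insert_iff by blast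
    moreover have "\<Union>(insert {a, b} M') = insert w (\<Union>M - {t})"
      using M'(5) UM tM0 aM0 bM0 \<open>a \<noteq> t\<close> by auto
    moreover have "insert {a, b} M' \<subseteq> M \<union> N" using M'(1) e1 unfolding M0_def N0_def by blast
    ultimately show ?thesis
      using w unfolding alternating_exchange_def
      by (intro disjI2 exI[of _ "insert {a, b} M'"] exI[of _ w] conjI)
  qed
qed

lemma alternating_exchange_augment:
  assumes "finite N" "disjoint N" "{t, a} \<in> M" "t \<notin> \<Union>N" "a \<notin> \<Union>N"
  shows "alternating_exchange M N t"
proof -
  have "{t, a} \<notin> N" using assms(4) by blast
  then have "card N < card (insert {t, a} N)" using assms(1) by simp
  moreover have "disjoint (insert {t, a} N)"
    using assms(2,4,5) unfolding disjoint_insert_iff by blast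
  ultimately show ?thesis
    using assms(3) unfolding alternating_exchange_def by (intro disjI1 exI[of _ "insert {t, a} N"]) blast
qed

lemma alternating_exchange_shift:
  assumes "finite M" "disjoint M" "{t, a} \<in> M" "a \<noteq> t" "{a, b} \<in> N" "b \<notin> \<Union>M"
  shows "alternating_exchange M N t"
proof -
  define M0 where "M0 = M - {{t, a}}"
  have "{a, b} \<notin> M0" using assms(6) unfolding M0_def by blast
  then have "card (insert {a, b} M0) = card M"
    using card_Suc_Diff1[OF assms(1,3)] assms(1) unfolding M0_def by simp
  moreover have "\<Union>M0 = \<Union>M - {t, a}" using Union_Diff_disjoint[OF assms(2,3)] unfolding M0_def .
  moreover have "disjoint (insert {a, b} M0)"
    using pairwise_subset[OF assms(2), of M0] calculation(2) assms(6)
    unfolding M0_def disjoint_insert_iff by blast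
  moreover have "\<Union>(insert {a, b} M0) = insert b (\<Union>M - {t})"
    using calculation(2) assms(3,4) by auto
  moreover have "insert {a, b} M0 \<subseteq> M \<union> N" using assms(5) unfolding M0_def by blast
  ultimately show ?thesis
    using assms(6) unfolding alternating_exchange_def
    by (intro disjI2 exI[of _ "insert {a, b} M0"] exI[of _ b] conjI)
qed

lemma alternating_exchange:
  assumes "finite M" "finite N" "\<forall>e\<in>M \<union> N. card e = 2" "disjoint M" "disjoint N"
    "t \<in> \<Union>M" "t \<notin> \<Union>N"
  shows "alternating_exchange M N t"
  using assms
proof (induction "card M" arbitrary: M N t rule: less_induct)
  case less
  note fin = less.prems(1,2) and two = less.prems(3) and disj = less.prems(4,5)
    and t = less.prems(6,7)
  obtain a where e0: "{t, a} \<in> M" "a \<noteq> t"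
    using t(1) two card_two_other by (metis UnCI UnionE)
  show ?case
  proof (cases "a \<in> \<Union>N")
    case False
    then show ?thesis using alternating_exchange_augment[OF fin(2) disj(2) e0(1) t(2)] by blast
  next
    case True
    then obtain b where e1: "{a, b} \<in> N" "b \<noteq> a"
      using two card_two_other by (metis UnCI UnionE)
    show ?thesis
    proof (cases "b \<in> \<Union>M")
      case False
      then show ?thesis using alternating_exchange_shift[OF fin(1) disj(1) e0 e1(1)] by blast
    next
      case bM: True
      define M0 where "M0 = M - {{t, a}}"
      have "b \<noteq> t" using e1 t(2) by blast
      have "alternating_exchange M0 (N - {{a, b}}) b"
      proof (rule less.hyps)
        show "card M0 < card M" using fin(1) e0(1) unfolding M0_def by (rule card_Diff1_less)
        show "b \<in> \<Union>M0"
          using Union_Diff_disjoint[OF disj(1) e0(1)] bM e1(2) \<open>b \<noteq> t\<close> unfolding M0_def by blast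
        show "b \<notin> \<Union>(N - {{a, b}})" using disjoint_eqI[OF disj(2) _ e1(1)] by blast
      qed (use fin two disj in \<open>auto simp: M0_def intro: pairwise_subset\<close>)
      then show ?thesis
        using alternating_exchange_step[OF fin disj e0(1) e1(1) t(2) e0(2) e1(2) bM]
        unfolding M0_def by blast
    qed
  qed
qed

definition maximum_matching :: "'v set set \<Rightarrow> 'v set set \<Rightarrow> bool" where
  "maximum_matching E M \<longleftrightarrow> matching E M \<and> card M = matching_number E"

definition edge_rel :: "'v set set \<Rightarrow> ('v \<times> 'v) set" where
  "edge_rel E = {(a, b). {a, b} \<in> E}"

lemma simple_graph_finite_vertices: "simple_graph V E \<Longrightarrow> finite V"
  by (simp add: simple_graph_def)

lemma simple_graph_edge_subset: "simple_graph V E \<Longrightarrow> e \<in> E \<Longrightarrow> e \<subseteq> V"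
  unfolding simple_graph_def by auto

lemma simple_graph_finite_edges: "simple_graph V E \<Longrightarrow> finite E"
  by (metis Pow_iff finite_Pow_iff finite_subset simple_graph_edge_subset
      simple_graph_finite_vertices subsetI)

lemma simple_graph_card_edge: "simple_graph V E \<Longrightarrow> e \<in> E \<Longrightarrow> card e = 2"
  unfolding simple_graph_def card_2_iff by blast

lemma simple_graph_no_loop: "simple_graph V E \<Longrightarrow> {a, b} \<in> E \<Longrightarrow> a \<noteq> b"
  using simple_graph_card_edge by fastforce

lemma finite_matching: "simple_graph V E \<Longrightarrow> matching E M \<Longrightarrow> finite M"
  using simple_graph_finite_edges unfolding matching_def by (meson finite_subset)

lemma finite_matching_cards: "simple_graph V E \<Longrightarrow> finite {card S | S. matching E S}"
proof (rule finite_subset)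
  show "{card S | S. matching E S} \<subseteq> card ` Pow E" unfolding matching_def by auto
qed (simp add: simple_graph_finite_edges)

lemma card_le_matching_number: "simple_graph V E \<Longrightarrow> matching E S \<Longrightarrow> card S \<le> matching_number E"
  unfolding matching_number_def using finite_matching_cards by (intro Max_ge) blast+

lemma maximum_matching_exists: "simple_graph V E \<Longrightarrow> \<exists>M. maximum_matching E M"
proof -
  assume s: "simple_graph V E"
  have "matching E {}" unfolding matching_def by blast
  then have "matching_number E \<in> {card S | S. matching E S}"
    unfolding matching_number_def using finite_matching_cards[OF s] by (intro Max_in) blast+
  then show ?thesis unfolding maximum_matching_def by auto
qed

lemma card_Union_matching:
  assumes s: "simple_graph V E" and M: "matching E M"
  shows "card (\<Union>M) = 2 * card M"
proof -
  have two: "\<forall>e\<in>M. card e = 2" using M simple_graph_card_edge[OF s] unfolding matching_def by blast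
  then have "card (\<Union>M) = sum card M"
    using M by (intro card_Union_disjoint) (auto simp: matching_iff_disjoint intro: card_ge_0_finite)
  also have "\<dots> = 2 * card M" using two by simp
  finally show ?thesis .
qed

lemma maximum_matching_no_edge_between_unmatched:
  assumes s: "simple_graph V E" and M: "maximum_matching E M" and "x \<notin> \<Union>M" "y \<notin> \<Union>M"
  shows "{x, y} \<notin> E"
proof
  assume e: "{x, y} \<in> E"
  have "{x, y} \<notin> M" using assms(3) by blast
  then have "card (insert {x, y} M) = Suc (matching_number E)"
    using M finite_matching[OF s] unfolding maximum_matching_def by simp
  moreover have "matching E (insert {x, y} M)"
    using M e assms(3,4) unfolding maximum_matching_def matching_iff_disjoint disjoint_insert_iff by blast
  ultimately show False using card_le_matching_number[OF s] by fastforce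
qed

text \<open>An alternating path cannot augment a maximum matching, so it shifts \<open>M\<close> to a
  maximum matching missing \<open>t\<close> at the price of covering a new vertex \<open>w\<close>.\<close>

lemma maximum_matching_exchange:
  assumes s: "simple_graph V E" and M: "maximum_matching E M" and N: "maximum_matching E N"
    and "t \<in> \<Union>M" "t \<notin> \<Union>N"
  shows "\<exists>M' w. maximum_matching E M' \<and> w \<notin> \<Union>M \<and> \<Union>M' = insert w (\<Union>M - {t})"
proof -
  have ME: "matching E M" "matching E N" using M N unfolding maximum_matching_def by blast+
  have MN: "M \<union> N \<subseteq> E" using ME unfolding matching_iff_disjoint by blast
  have "alternating_exchange M N t"
    using ME assms(4,5) MN simple_graph_card_edge[OF s]
    by (intro alternating_exchange finite_matching[OF s]) (auto simp: matching_iff_disjoint)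
  moreover have "\<not> (N' \<subseteq> M \<union> N \<and> disjoint N' \<and> card N < card N')" for N'
    using card_le_matching_number[OF s, of N'] MN N
    unfolding matching_iff_disjoint maximum_matching_def by fastforce
  ultimately obtain M' w where M': "M' \<subseteq> M \<union> N" "disjoint M'" "card M' = card M"
    "w \<notin> \<Union>M" "\<Union>M' = insert w (\<Union>M - {t})"
    unfolding alternating_exchange_def by blast
  have "maximum_matching E M'"
    using M' MN M unfolding maximum_matching_def matching_iff_disjoint by auto
  then show ?thesis using M' by blast
qed

text \<open>Gallai's lemma.  Induction on the length of a connecting path: the exchange lemma
  moves the unmatched endpoint \<open>u\<close> one step along it.\<close>

lemma unmatched_vertices_not_connected:
  assumes s: "simple_graph V E" and avoid: "\<forall>v\<in>V. \<exists>N. maximum_matching E N \<and> v \<notin> \<Union>N"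
    and M: "maximum_matching E M" "u \<notin> \<Union>M" "v \<notin> \<Union>M" and "u \<noteq> v"
  shows "(u, v) \<notin> (edge_rel E)\<^sup>*"
proof
  assume "(u, v) \<in> (edge_rel E)\<^sup>*"
  then obtain n where "(u, v) \<in> edge_rel E ^^ n" using rtrancl_power by blast
  with M \<open>u \<noteq> v\<close> show False
  proof (induction n arbitrary: M u)
    case 0
    then show ?case by simp
  next
    case (Suc n)
    obtain t where ut: "{u, t} \<in> E" and tv: "(t, v) \<in> edge_rel E ^^ n"
      using relpow_Suc_D2[OF Suc.prems(5)] unfolding edge_rel_def by blast
    note no_edge = maximum_matching_no_edge_between_unmatched[OF s]
    have tM: "t \<in> \<Union>M" using no_edge[OF Suc.prems(1,2), of t] ut by blast
    moreover obtain N where "maximum_matching E N" "t \<notin> \<Union>N"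
      using avoid simple_graph_edge_subset[OF s ut] by blast
    ultimately obtain M' w where M': "maximum_matching E M'" "w \<notin> \<Union>M"
      "\<Union>M' = insert w (\<Union>M - {t})"
      using maximum_matching_exchange[OF s Suc.prems(1)] by blast
    have tM': "t \<notin> \<Union>M'" using M'(2,3) tM by auto
    have "u = w"
    proof (rule ccontr)
      assume "u \<noteq> w"
      then have uM': "u \<notin> \<Union>M'" using M'(3) Suc.prems(2) by auto
      show False using no_edge[OF M'(1) uM' tM'] ut by blast
    qed
    then have "v \<notin> \<Union>M'" using M'(3) Suc.prems(3,4) by auto
    moreover have "t \<noteq> v" using no_edge[OF Suc.prems(1,2,3)] ut by blast
    ultimately show False using Suc.IH[OF M'(1) tM' _ _ tv] by blast
  qed
qed

lemma sym_edge_rel: "sym (edge_rel E)"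
  unfolding sym_def edge_rel_def by (simp add: insert_commute)

lemma edge_rel_component_closed:
  "y \<in> (edge_rel E)\<^sup>* `` {x} \<Longrightarrow> {y, z} \<in> E \<Longrightarrow> z \<in> (edge_rel E)\<^sup>* `` {x}"
  unfolding edge_rel_def by (auto intro: rtrancl_into_rtrancl)

lemma edge_rel_component_subset:
  assumes s: "simple_graph V E" and "x \<in> V"
  shows "(edge_rel E)\<^sup>* `` {x} \<subseteq> V"
proof
  fix y assume "y \<in> (edge_rel E)\<^sup>* `` {x}"
  then have "(x, y) \<in> (edge_rel E)\<^sup>*" by simp
  then show "y \<in> V"
    by (induction rule: rtrancl_induct)
      (use assms simple_graph_edge_subset[OF s] in \<open>auto simp: edge_rel_def\<close>)
qed

lemma unmatched_components_disjoint:
  assumes s: "simple_graph V E" and avoid: "\<forall>v\<in>V. \<exists>N. maximum_matching E N \<and> v \<notin> \<Union>N"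
    and M: "maximum_matching E M" "x \<notin> \<Union>M" "x' \<notin> \<Union>M" and "x \<noteq> x'"
  shows "(edge_rel E)\<^sup>* `` {x} \<inter> (edge_rel E)\<^sup>* `` {x'} = {}"
proof -
  have "(x, x') \<in> (edge_rel E)\<^sup>*" if "(x, z) \<in> (edge_rel E)\<^sup>*" "(x', z) \<in> (edge_rel E)\<^sup>*" for z
    using that symD[OF sym_rtrancl[OF sym_edge_rel]] by (meson rtrancl_trans)
  then show ?thesis using unmatched_vertices_not_connected[OF assms] by blast
qed

lemma odd_card_unmatched_component:
  assumes s: "simple_graph V E" and avoid: "\<forall>v\<in>V. \<exists>N. maximum_matching E N \<and> v \<notin> \<Union>N"
    and M: "maximum_matching E M" and x: "x \<in> V" "x \<notin> \<Union>M"
  shows "odd (card ((edge_rel E)\<^sup>* `` {x}))"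
proof -
  define C where "C = (edge_rel E)\<^sup>* `` {x}"
  define Mx where "Mx = {e \<in> M. e \<subseteq> C}"
  have mM: "matching E M" using M unfolding maximum_matching_def by blast
  have mMx: "matching E Mx"
    using mM pairwise_subset[of disjnt M Mx] unfolding Mx_def matching_iff_disjoint by auto
  have "C - {x} \<subseteq> \<Union>Mx"
  proof
    fix y assume y: "y \<in> C - {x}"
    have "y \<in> \<Union>M"
    proof (rule ccontr)
      assume "y \<notin> \<Union>M"
      from unmatched_vertices_not_connected[OF s avoid M x(2) this] y show False
        unfolding C_def by auto
    qed
    then obtain e where e: "e \<in> M" "y \<in> e" by blast
    then have eE: "e \<in> E" using mM unfolding matching_def by blast
    obtain z where z: "e = {y, z}"
      using card_two_other[OF simple_graph_card_edge[OF s eE] e(2)] by blast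
    have "z \<in> C" using edge_rel_component_closed[of y E x z] eE y z unfolding C_def by blast
    then have "e \<subseteq> C" using z y by blast
    then show "y \<in> \<Union>Mx" using e unfolding Mx_def by blast
  qed
  moreover have "\<Union>Mx \<subseteq> C - {x}" using x(2) unfolding Mx_def by blast
  ultimately have "C - {x} = \<Union>Mx" by blast
  moreover have "finite C"
    using edge_rel_component_subset[OF s x(1)] simple_graph_finite_vertices[OF s]
    unfolding C_def by (rule finite_subset)
  moreover have "x \<in> C" unfolding C_def by simp
  ultimately have "card C = Suc (card (\<Union>Mx))" using card_Suc_Diff1 by metis
  then have "card C = Suc (2 * card Mx)" using card_Union_matching[OF s mMx] by simp
  then show ?thesis unfolding C_def by simp
qed

lemma matching_number_delete_covered_vertex:
  assumes s: "simple_graph V E" and cover: "\<forall>N. maximum_matching E N \<longrightarrow> v \<in> \<Union>N"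
  shows "Suc (matching_number {e \<in> E. v \<notin> e}) \<le> matching_number E"
proof -
  have "simple_graph V {e \<in> E. v \<notin> e}" using s unfolding simple_graph_def by blast
  then obtain M where M: "maximum_matching {e \<in> E. v \<notin> e} M"
    using maximum_matching_exists by blast
  then have "matching E M" "v \<notin> \<Union>M"
    unfolding maximum_matching_def matching_def by blast+
  then have "card M < matching_number E"
    using cover card_le_matching_number[OF s] unfolding maximum_matching_def
    by (metis le_neq_implies_less)
  then show ?thesis using M unfolding maximum_matching_def by simp
qed

section \<open>Alternating matrices of odd size are singular\<close>

definition alternating_on :: "'v set \<Rightarrow> ('v \<Rightarrow> 'v \<Rightarrow> 'k::field) \<Rightarrow> bool" where
  "alternating_on S A \<longleftrightarrow> (\<forall>a\<in>S. A a a = 0) \<and> (\<forall>a\<in>S. \<forall>b\<in>S. A b a = - A a b)"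

lemma alternating_on_subset: "alternating_on S A \<Longrightarrow> T \<subseteq> S \<Longrightarrow> alternating_on T A"
  unfolding alternating_on_def by blast

text \<open>Gaussian elimination of the pivot pair \<open>(v, w)\<close> from an alternating matrix:
  the Schur complement of the \<open>2 \<times> 2\<close> block on \<open>{v, w}\<close>.\<close>

definition pivot :: "('v \<Rightarrow> 'v \<Rightarrow> 'k::field) \<Rightarrow> 'v \<Rightarrow> 'v \<Rightarrow> 'v \<Rightarrow> 'v \<Rightarrow> 'k" where
  "pivot A v w i j = A i j + (A i v * A w j - A i w * A v j) / A v w"

lemma alternating_on_pivot:
  assumes alt: "alternating_on S A" and "v \<in> S" "w \<in> S"
  shows "alternating_on (S - {v, w}) (pivot A v w)"
  unfolding alternating_on_def
proof (intro conjI ballI)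
  fix a b assume "a \<in> S - {v, w}" "b \<in> S - {v, w}"
  then have "a \<in> S" "b \<in> S" by auto
  then have skew: "A b a = - A a b" "A w a = - A a w" "A v a = - A a v" "A w b = - A b w"
      "A v b = - A b v" and "A a a = 0"
    using alt assms(2,3) unfolding alternating_on_def by blast+
  have "A b v * A w a - A b w * A v a = - (A a v * A w b - A a w * A v b)"
    unfolding skew by (simp add: algebra_simps)
  then show "pivot A v w b a = - pivot A v w a b"
    unfolding pivot_def skew(1) by (simp add: minus_divide_left)
  show "pivot A v w a a = 0"
    unfolding pivot_def skew(2,3) \<open>A a a = 0\<close> by (simp add: mult.commute)
qed

lemma kernel_vector_unpivot:
  fixes A :: "'v \<Rightarrow> 'v \<Rightarrow> 'k::field"
  assumes alt: "alternating_on S A" and fin: "finite S" and S: "v \<in> S" "w \<in> S" "v \<noteq> w"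
    and \<alpha>: "A v w \<noteq> 0"
    and z': "\<forall>a\<in>S - {v, w}. (\<Sum>b\<in>S - {v, w}. pivot A v w a b * z' b) = 0"
  defines "z \<equiv> z'(v := (\<Sum>j\<in>S - {v, w}. A w j * z' j) / A v w,
                 w := - (\<Sum>j\<in>S - {v, w}. A v j * z' j) / A v w)"
  shows "\<forall>a\<in>S. (\<Sum>b\<in>S. A a b * z b) = 0"
proof
  define S' where "S' = S - {v, w}"
  define \<sigma> where "\<sigma> u = (\<Sum>j\<in>S'. A u j * z' j)" for u
  have z_v: "z v = \<sigma> w / A v w" and z_w: "z w = - \<sigma> v / A v w"
    using S(3) unfolding z_def \<sigma>_def S'_def by simp_all
  have expand: "(\<Sum>b\<in>S. A a b * z b) = A a v * z v + A a w * z w + \<sigma> a" for a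
  proof -
    have "S = insert v (insert w S')" "v \<notin> S'" "w \<notin> S'" "finite S'"
      using S fin unfolding S'_def by auto
    moreover have "(\<Sum>j\<in>S'. A a j * z j) = \<sigma> a"
      unfolding \<sigma>_def z_def by (rule sum.cong) (auto simp: S'_def)
    ultimately show ?thesis using S(3) by (simp add: algebra_simps)
  qed
  have Avv: "A v v = 0" "A w w = 0" and Awv: "A w v = - A v w"
    using alt S unfolding alternating_on_def by blast+
  fix a assume a: "a \<in> S"
  then consider "a = v" | "a = w" | "a \<in> S'" unfolding S'_def by blast
  then show "(\<Sum>b\<in>S. A a b * z b) = 0"
  proof cases
    case 3
    \<comment> \<open>row \<open>a\<close> of the pivoted system is row \<open>a\<close> of the original one\<close>
    have "(\<Sum>j\<in>S'. pivot A v w a j * z' j) = (\<Sum>j\<in>S'. A a j * z' j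
        + A a v / A v w * (A w j * z' j) - A a w / A v w * (A v j * z' j))"
      by (rule sum.cong) (use \<alpha> in \<open>simp_all add: pivot_def field_simps\<close>)
    also have "\<dots> = \<sigma> a + A a v / A v w * \<sigma> w - A a w / A v w * \<sigma> v"
      unfolding \<sigma>_def by (simp add: sum.distrib sum_subtractf sum_distrib_left)
    also have "\<dots> = (\<Sum>b\<in>S. A a b * z b)" unfolding expand z_v z_w by (simp add: algebra_simps)
    finally show ?thesis using z' 3 unfolding S'_def by simp
  next
    case 1
    have "A v w * z w = - \<sigma> v" unfolding z_w using \<alpha> by simp
    then show ?thesis unfolding expand 1 Avv by simp
  next
    case 2
    have "A w v * z v = - \<sigma> w" unfolding z_v Awv using \<alpha> by simp
    then show ?thesis unfolding expand 2 Avv by simp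
  qed
qed

lemma alternating_odd_kernel:
  fixes A :: "'v \<Rightarrow> 'v \<Rightarrow> 'k::field"
  assumes "finite S" "odd (card S)" "alternating_on S A"
  shows "\<exists>z \<in> supported_on S. z \<noteq> 0 \<and> (\<forall>a\<in>S. (\<Sum>b\<in>S. A a b * z b) = 0)"
  using assms
proof (induction "card S" arbitrary: S A rule: less_induct)
  case less
  note fin = less.prems(1) and alt = less.prems(3)
  show ?case
  proof (cases "\<forall>a\<in>S. \<forall>b\<in>S. A a b = 0")
    case True
    have "S \<noteq> {}" using less.prems(2) by (metis card.empty even_zero)
    then obtain s where s: "s \<in> S" by blast
    have "unit_vec s \<in> supported_on S" "unit_vec s \<noteq> (0 :: 'v \<Rightarrow> 'k)"
      using s by (auto simp: supported_on_def unit_vec_def fun_eq_iff)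
    then show ?thesis using True by (intro bexI[of _ "unit_vec s"]) auto
  next
    case False
    then obtain v w where S: "v \<in> S" "w \<in> S" and \<alpha>: "A v w \<noteq> 0" by blast
    have "A v v = 0" using alt S(1) unfolding alternating_on_def by blast
    then have "v \<noteq> w" using \<alpha> by blast
    then have "card {v, w} = 2" "{v, w} \<subseteq> S" using S by simp_all
    then have card: "card S = card (S - {v, w}) + 2"
      using card_Diff_subset[OF _ \<open>{v, w} \<subseteq> S\<close>] card_mono[OF fin \<open>{v, w} \<subseteq> S\<close>] by simp
    then have "card (S - {v, w}) < card S" "odd (card (S - {v, w}))" using less.prems(2) by simp_all
    from less.hyps[OF this(1) finite_Diff[OF fin] this(2) alternating_on_pivot[OF alt S]]
    obtain z' where z': "z' \<in> supported_on (S - {v, w})" "z' \<noteq> 0"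
      "\<forall>a\<in>S - {v, w}. (\<Sum>b\<in>S - {v, w}. pivot A v w a b * z' b) = 0"
      by blast
    define z where "z = z'(v := (\<Sum>j\<in>S - {v, w}. A w j * z' j) / A v w,
                           w := - (\<Sum>j\<in>S - {v, w}. A v j * z' j) / A v w)"
    have "z \<in> supported_on S" using z'(1) S unfolding z_def supported_on_def by auto
    moreover have "z \<noteq> 0" using z'(1,2) unfolding z_def supported_on_def fun_eq_iff by auto
    moreover have "\<forall>a\<in>S. (\<Sum>b\<in>S. A a b * z b) = 0"
      using kernel_vector_unpivot[OF alt fin S \<open>v \<noteq> w\<close> \<alpha> z'(3)] unfolding z_def .
    ultimately show ?thesis by blast
  qed
qed

section \<open>Stabilizers as radicals of alternating forms\<close>

text \<open>The Gram matrix of the alternating form \<open>(x, y) \<mapsto> \<ell>([x, y])\<close> on the vertex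
  coordinates, where \<open>c e\<close> is the value of \<open>\<ell>\<close> on the basis vector of the edge \<open>e\<close>.\<close>

definition edge_form_matrix :: "'v::linorder set set \<Rightarrow> ('v set \<Rightarrow> 'k) \<Rightarrow> 'v \<Rightarrow> 'v \<Rightarrow> 'k::field" where
  "edge_form_matrix E c a b = (if {a, b} \<in> E then if a < b then c {a, b} else - c {a, b} else 0)"

definition form_radical :: "'v set \<Rightarrow> 'w set \<Rightarrow> ('v \<Rightarrow> 'v \<Rightarrow> 'k) \<Rightarrow> ('v + 'w \<Rightarrow> 'k::field) set" where
  "form_radical V W A =
     {y \<in> supported_on (Inl ` V \<union> Inr ` W). \<forall>a\<in>V. (\<Sum>b\<in>V. A a b * y (Inl b)) = 0}"

lemma alternating_on_edge_form_matrix: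
  fixes E :: "'v::linorder set set"
  assumes s: "simple_graph V E"
  shows "alternating_on V (edge_form_matrix E c)"
proof -
  have "{a} \<notin> E" for a using simple_graph_no_loop[OF s, of a a] by (metis insert_absorb2)
  then show ?thesis
    unfolding alternating_on_def edge_form_matrix_def by (auto simp: insert_commute)
qed

lemma edge_form_matrix_eq_0: "{a, b} \<notin> E \<Longrightarrow> edge_form_matrix E c a b = 0"
  by (simp add: edge_form_matrix_def)

lemma subspace_form_radical: "VS.subspace (form_radical V W A :: ('v + 'w \<Rightarrow> 'k::field) set)"
proof -
  have "(\<Sum>b\<in>V. A a b * (y + z) (Inl b)) = (\<Sum>b\<in>V. A a b * y (Inl b)) + (\<Sum>b\<in>V. A a b * z (Inl b))"
    and "(\<Sum>b\<in>V. A a b * scal c y (Inl b)) = c * (\<Sum>b\<in>V. A a b * y (Inl b))"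
    for a c and y z :: "'v + 'w \<Rightarrow> 'k"
    by (simp_all add: sum.distrib distrib_left sum_distrib_left mult.left_commute)
  then show ?thesis
    unfolding VS.subspace_def form_radical_def supported_on_def by simp
qed

lemma form_radical_subset_span:
  "finite V \<Longrightarrow> finite W \<Longrightarrow>
    form_radical V W A \<subseteq> VS.span (unit_vec ` (Inl ` V \<union> Inr ` W) :: ('v + 'w \<Rightarrow> 'k::field) set)"
  using supported_on_subset_span[of "Inl ` V \<union> Inr ` W"] unfolding form_radical_def by blast

lemma graph_lie_bracket_eq_sum:
  fixes x y :: "'v::linorder + 'v set \<Rightarrow> 'k::field"
  assumes "finite E"
  shows "graph_lie_bracket V E x y = (\<Sum>e\<in>E. scal
           (x (Inl (Min e)) * y (Inl (Max e)) - x (Inl (Max e)) * y (Inl (Min e))) (unit_vec (Inr e)))"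
proof
  fix i :: "'v + 'v set"
  have "(\<Sum>e\<in>E. scal (x (Inl (Min e)) * y (Inl (Max e)) - x (Inl (Max e)) * y (Inl (Min e)))
          (unit_vec (Inr e))) i
      = (\<Sum>e\<in>E. if i = Inr e
           then x (Inl (Min e)) * y (Inl (Max e)) - x (Inl (Max e)) * y (Inl (Min e)) else 0)"
    unfolding sum_fun_apply by (rule sum.cong) (auto simp: unit_vec_def)
  also have "\<dots> = graph_lie_bracket V E x y i"
    using assms by (cases i) (auto simp: graph_lie_bracket_def sum.delta)
  finally show "graph_lie_bracket V E x y i = (\<Sum>e\<in>E. scal
      (x (Inl (Min e)) * y (Inl (Max e)) - x (Inl (Max e)) * y (Inl (Min e))) (unit_vec (Inr e))) i" ..
qed

lemma lin_functional_sum: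
  fixes f :: "'j \<Rightarrow> 'i \<Rightarrow> 'k::field"
  assumes l: "lin_functional S l" and S: "VS.subspace S" and "finite F" "\<forall>i\<in>F. f i \<in> S"
  shows "l (\<Sum>i\<in>F. f i) = (\<Sum>i\<in>F. l (f i))"
  using assms(3,4)
proof (induction F rule: finite_induct)
  case empty
  have "(0 :: 'i \<Rightarrow> 'k) \<in> S" using S by (rule VS.subspace_0)
  then have "l (scal 0 0) = 0 * l 0" using l unfolding lin_functional_def by blast
  then show ?case by (simp add: scal_def zero_fun_def)
next
  case (insert i F)
  have "(\<Sum>i\<in>F. f i) \<in> S" by (rule VS.subspace_sum[OF S]) (use insert.prems in simp)
  then have add: "l (f i + (\<Sum>i\<in>F. f i)) = l (f i) + l (\<Sum>i\<in>F. f i)"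
    using l insert.prems unfolding lin_functional_def by simp
  have "l (\<Sum>i\<in>F. f i) = (\<Sum>i\<in>F. l (f i))" using insert.IH insert.prems by simp
  then show ?case unfolding sum.insert[OF insert.hyps] add by (rule arg_cong)
qed

lemma edge_form_matrix_bilinear:
  fixes x y :: "'v::linorder \<Rightarrow> 'k::field"
  assumes s: "simple_graph V E"
  shows "(\<Sum>a\<in>V. x a * (\<Sum>b\<in>V. edge_form_matrix E c a b * y b))
       = (\<Sum>e\<in>E. c e * (x (Min e) * y (Max e) - x (Max e) * y (Min e)))"
proof -
  define f where "f p = x (fst p) * edge_form_matrix E c (fst p) (snd p) * y (snd p)" for p
  define P where "P = {p \<in> V \<times> V. {fst p, snd p} \<in> E}"
  have finV: "finite (V \<times> V)" using simple_graph_finite_vertices[OF s] by simp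
  have "(\<Sum>a\<in>V. x a * (\<Sum>b\<in>V. edge_form_matrix E c a b * y b)) = (\<Sum>p\<in>V \<times> V. f p)"
    by (simp add: sum.cartesian_product sum_distrib_left f_def mult.assoc case_prod_unfold)
  also have "\<dots> = (\<Sum>p\<in>P. f p)"
    by (rule sum.mono_neutral_right[OF finV]) (auto simp: P_def f_def edge_form_matrix_eq_0)
  also have "\<dots> = (\<Sum>e\<in>E. \<Sum>p\<in>{p \<in> P. {fst p, snd p} = e}. f p)"
    using finV simple_graph_finite_edges[OF s]
    by (intro sum.group[symmetric]) (auto simp: P_def intro: finite_subset)
  also have "\<dots> = (\<Sum>e\<in>E. c e * (x (Min e) * y (Max e) - x (Max e) * y (Min e)))"
  proof (rule sum.cong[OF refl])
    fix e assume e: "e \<in> E"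
    obtain a b where ab: "a < b" "e = {a, b}"
      using card_two_ordered[OF simple_graph_card_edge[OF s e]] .
    have "a \<in> V" "b \<in> V" using simple_graph_edge_subset[OF s e] ab(2) by auto
    then have "{p \<in> P. {fst p, snd p} = e} = {(a, b), (b, a)}"
      using e ab(2) unfolding P_def by (auto simp: doubleton_eq_iff insert_commute)
    moreover have "Min e = a" "Max e = b" "\<not> b < a" using ab by auto
    ultimately show "(\<Sum>p\<in>{p \<in> P. {fst p, snd p} = e}. f p)
        = c e * (x (Min e) * y (Max e) - x (Max e) * y (Min e))"
      using e ab by (simp add: f_def edge_form_matrix_def insert_commute algebra_simps)
  qed
  finally show ?thesis .
qed

lemma lin_functional_graph_lie_bracket:
  fixes l :: "('v::linorder + 'v set \<Rightarrow> 'k::field) \<Rightarrow> 'k"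
  assumes s: "simple_graph V E" and l: "lin_functional (graph_lie_carrier V E) l"
  shows "l (graph_lie_bracket V E x y)
       = (\<Sum>a\<in>V. x (Inl a) * (\<Sum>b\<in>V. edge_form_matrix E (\<lambda>e. l (unit_vec (Inr e))) a b * y (Inl b)))"
proof -
  have finE: "finite E" using simple_graph_finite_edges[OF s] .
  have unit: "unit_vec (Inr e) \<in> graph_lie_carrier V E" if "e \<in> E" for e
    unfolding graph_lie_carrier_eq using that by (intro unit_vec_in_supported_on) blast
  have scale: "l (scal c u) = c * l u" if "u \<in> graph_lie_carrier V E" for c u
    using l that unfolding lin_functional_def by blast
  have sub: "VS.subspace (graph_lie_carrier V E :: ('v + 'v set \<Rightarrow> 'k) set)"
    unfolding graph_lie_carrier_eq by (rule subspace_supported_on)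
  have "l (graph_lie_bracket V E x y) = (\<Sum>e\<in>E. l (scal
      (x (Inl (Min e)) * y (Inl (Max e)) - x (Inl (Max e)) * y (Inl (Min e))) (unit_vec (Inr e))))"
    unfolding graph_lie_bracket_eq_sum[OF finE]
    by (rule lin_functional_sum[OF l sub finE]) (simp add: VS.subspace_scale[OF sub] unit)
  also have "\<dots> = (\<Sum>e\<in>E. l (unit_vec (Inr e))
      * (x (Inl (Min e)) * y (Inl (Max e)) - x (Inl (Max e)) * y (Inl (Min e))))"
    by (intro sum.cong refl) (simp add: scale unit mult.commute)
  finally show ?thesis
    unfolding edge_form_matrix_bilinear[OF s, of "\<lambda>a. x (Inl a)" _ "\<lambda>b. y (Inl b)"] .
qed

lemma pairing_with_supported_on_eq_0_iff:
  fixes g :: "'v \<Rightarrow> 'k::field" and W :: "'w set"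
  assumes "finite V"
  shows "(\<forall>x \<in> supported_on (Inl ` V \<union> Inr ` W). (\<Sum>a\<in>V. x (Inl a) * g a) = 0)
     \<longleftrightarrow> (\<forall>a\<in>V. g a = 0)"
proof (intro iffI ballI)
  fix a assume all: "\<forall>x \<in> supported_on (Inl ` V \<union> Inr ` W). (\<Sum>a\<in>V. x (Inl a) * g a) = 0"
    and a: "a \<in> V"
  have "unit_vec (Inl a) \<in> (supported_on (Inl ` V \<union> Inr ` W) :: ('v + 'w \<Rightarrow> 'k) set)"
    using a by (intro unit_vec_in_supported_on) blast
  have "(\<Sum>a'\<in>V. (unit_vec (Inl a) :: 'v + 'w \<Rightarrow> 'k) (Inl a') * g a') = (\<Sum>a'\<in>V. if a = a' then g a' else 0)"
    by (rule sum.cong) (auto simp: unit_vec_def)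
  also have "\<dots> = g a" using assms a by (simp add: sum.delta)
  finally show "g a = 0" using all[rule_format, OF \<open>unit_vec (Inl a) \<in> _\<close>] by simp
qed simp

lemma stabilizer_eq_form_radical:
  fixes l :: "('v::linorder + 'v set \<Rightarrow> 'k::field) \<Rightarrow> 'k"
  assumes s: "simple_graph V E" and l: "lin_functional (graph_lie_carrier V E) l"
  shows "stabilizer V E l = form_radical V E (edge_form_matrix E (\<lambda>e. l (unit_vec (Inr e))))"
proof -
  have "(\<forall>x\<in>graph_lie_carrier V E. l (graph_lie_bracket V E x y) = 0)
    \<longleftrightarrow> (\<forall>a\<in>V. (\<Sum>b\<in>V. edge_form_matrix E (\<lambda>e. l (unit_vec (Inr e))) a b * y (Inl b)) = 0)"
    for y :: "'v + 'v set \<Rightarrow> 'k"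
    unfolding lin_functional_graph_lie_bracket[OF s l] graph_lie_carrier_eq
    by (rule pairing_with_supported_on_eq_0_iff[OF simple_graph_finite_vertices[OF s]])
  then show ?thesis unfolding stabilizer_def form_radical_def graph_lie_carrier_eq by simp
qed

section \<open>The rank bound\<close>

lemma dim_form_radical_delete_vertex:
  fixes A :: "'v \<Rightarrow> 'v \<Rightarrow> 'k::field" and W :: "'w set"
  assumes fin: "finite V" "finite W" and v: "v \<in> V"
  shows "VS.dim (form_radical (V - {v}) W A :: ('v + 'w \<Rightarrow> 'k) set)
       \<le> Suc (VS.dim (form_radical V W A :: ('v + 'w \<Rightarrow> 'k) set))"
proof -
  define \<phi> where "\<phi> y = (\<Sum>b\<in>V. A v b * y (Inl b))" for y :: "'v + 'w \<Rightarrow> 'k"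
  define R where "R = (form_radical (V - {v}) W A :: ('v + 'w \<Rightarrow> 'k) set)"
  have "VS.dim R \<le> Suc (VS.dim {y \<in> R. \<phi> y = 0})"
    unfolding R_def
  proof (rule dim_le_dim_kernel_Suc[OF subspace_form_radical form_radical_subset_span])
    show "\<phi> (x + y) = \<phi> x + \<phi> y" for x y unfolding \<phi>_def by (simp add: sum.distrib distrib_left)
    show "\<phi> (scal c x) = c * \<phi> x" for c x
      unfolding \<phi>_def by (simp add: sum_distrib_left mult.left_commute)
  qed (use fin in auto)
  \<comment> \<open>a vector of \<open>R\<close> vanishes at \<open>v\<close>, so the rows of \<open>A\<close> over \<open>V\<close> and over \<open>V - {v}\<close> agree on it\<close>
  moreover have "{y \<in> R. \<phi> y = 0} \<subseteq> form_radical V W A"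
  proof
    fix y assume y: "y \<in> {y \<in> R. \<phi> y = 0}"
    then have "y (Inl v) = 0" unfolding R_def form_radical_def supported_on_def by auto
    then have "(\<Sum>b\<in>V. A a b * y (Inl b)) = (\<Sum>b\<in>V - {v}. A a b * y (Inl b))" for a
      using fin(1) v by (simp add: sum.remove)
    then show "y \<in> form_radical V W A"
      using y unfolding R_def \<phi>_def form_radical_def supported_on_def by auto
  qed
  then have "VS.dim {y \<in> R. \<phi> y = 0} \<le> VS.dim (form_radical V W A :: ('v + 'w \<Rightarrow> 'k) set)"
    using form_radical_subset_span[OF fin] fin by (intro dim_mono_finite_span) auto
  ultimately show ?thesis unfolding R_def by simp
qed

lemma kernel_vector_on_closed_odd_set:
  fixes A :: "'v \<Rightarrow> 'v \<Rightarrow> 'k::field" and W :: "'w set"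
  assumes "finite V" "C \<subseteq> V" "odd (card C)" "alternating_on C A"
    and closed: "\<And>a b. a \<in> V \<Longrightarrow> b \<in> C \<Longrightarrow> A a b \<noteq> 0 \<Longrightarrow> a \<in> C"
  shows "\<exists>y \<in> form_radical V W A. y \<noteq> 0 \<and> y \<in> supported_on (Inl ` C)"
proof -
  have "finite C" using assms(1,2) by (rule finite_subset[rotated])
  then obtain z where z: "z \<in> supported_on C" "z \<noteq> 0" "\<forall>a\<in>C. (\<Sum>b\<in>C. A a b * z b) = 0"
    using alternating_odd_kernel assms(3,4) by blast
  define y :: "'v + 'w \<Rightarrow> 'k" where "y = case_sum z (\<lambda>_. 0)"
  have "(\<Sum>b\<in>V. A a b * z b) = 0" if a: "a \<in> V" for a
  proof -
    have "(\<Sum>b\<in>V. A a b * z b) = (\<Sum>b\<in>C. A a b * z b)"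
      using z(1) assms(1,2) by (intro sum.mono_neutral_right) (auto simp: supported_on_def)
    also have "\<dots> = 0"
      using z(3) closed[OF a] by (cases "a \<in> C") (auto intro!: sum.neutral, blast)
    finally show ?thesis .
  qed
  moreover have "y \<in> supported_on (Inl ` V \<union> Inr ` W)" "y \<noteq> 0" "y \<in> supported_on (Inl ` C)"
    using z(1,2) assms(2) by (auto simp: y_def supported_on_def fun_eq_iff split: sum.split)
  ultimately show ?thesis unfolding form_radical_def y_def by auto
qed

lemma card_unmatched_vertices:
  assumes s: "simple_graph V E" and M: "maximum_matching E M"
  shows "card (V - \<Union>M) + 2 * matching_number E = card V"
proof -
  have finV: "finite V" using simple_graph_finite_vertices[OF s] .
  have "card (\<Union>M) = 2 * matching_number E"
    using M card_Union_matching[OF s] unfolding maximum_matching_def by simp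
  moreover have UV: "\<Union>M \<subseteq> V" using M simple_graph_edge_subset[OF s]
    unfolding maximum_matching_def matching_def by blast
  moreover have "card (V - \<Union>M) = card V - card (\<Union>M)"
    using card_Diff_subset[OF finite_subset[OF UV finV] UV] .
  ultimately show ?thesis using card_mono[OF finV UV] by linarith
qed

lemma kernel_vector_on_unmatched_component:
  fixes A :: "'v \<Rightarrow> 'v \<Rightarrow> 'k::field" and W :: "'w set"
  assumes s: "simple_graph V E" and alt: "alternating_on V A"
    and supp: "\<forall>a\<in>V. \<forall>b\<in>V. A a b \<noteq> 0 \<longrightarrow> {a, b} \<in> E"
    and avoid: "\<forall>v\<in>V. \<exists>N. maximum_matching E N \<and> v \<notin> \<Union>N"
    and M: "maximum_matching E M" and x: "x \<in> V" "x \<notin> \<Union>M"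
  shows "\<exists>y \<in> form_radical V W A. y \<noteq> 0 \<and> y \<in> supported_on (Inl ` (edge_rel E)\<^sup>* `` {x})"
proof -
  define C where "C = (edge_rel E)\<^sup>* `` {x}"
  have CV: "C \<subseteq> V" using edge_rel_component_subset[OF s x(1)] unfolding C_def .
  show ?thesis unfolding C_def[symmetric]
  proof (rule kernel_vector_on_closed_odd_set[OF simple_graph_finite_vertices[OF s] CV])
    show "odd (card C)" unfolding C_def by (rule odd_card_unmatched_component[OF s avoid M x])
    show "alternating_on C A" using alternating_on_subset[OF alt CV] .
    fix a b assume ab: "a \<in> V" "b \<in> C" "A a b \<noteq> 0"
    then have "{a, b} \<in> E" using supp CV by blast
    then have "{b, a} \<in> E" by (simp add: insert_commute)
    then show "a \<in> C" using edge_rel_component_closed[of b E x a] ab(2) unfolding C_def by blast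
  qed
qed

lemma card_le_dim_form_radical_if_avoidable:
  fixes A :: "'v \<Rightarrow> 'v \<Rightarrow> 'k::field" and W :: "'w set"
  assumes s: "simple_graph V E" and "finite W" and alt: "alternating_on V A"
    and supp: "\<forall>a\<in>V. \<forall>b\<in>V. A a b \<noteq> 0 \<longrightarrow> {a, b} \<in> E"
    and avoid: "\<forall>v\<in>V. \<exists>N. maximum_matching E N \<and> v \<notin> \<Union>N"
  shows "card V + card W \<le> VS.dim (form_radical V W A :: ('v + 'w \<Rightarrow> 'k) set) + 2 * matching_number E"
proof -
  have finV: "finite V" using simple_graph_finite_vertices[OF s] .
  obtain M where M: "maximum_matching E M" using maximum_matching_exists[OF s] by blast
  define X where "X = V - \<Union>M"
  define C where "C x = (edge_rel E)\<^sup>* `` {x}" for x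
  have "\<forall>x\<in>X. \<exists>y. y \<in> form_radical V W A \<and> y \<noteq> 0 \<and> y \<in> supported_on (Inl ` C x)"
    using kernel_vector_on_unmatched_component[OF s alt supp avoid M] unfolding X_def C_def by blast
  then obtain y where y: "\<And>x. x \<in> X \<Longrightarrow> y x \<in> form_radical V W A"
    "\<And>x. x \<in> X \<Longrightarrow> y x \<noteq> 0" "\<And>x. x \<in> X \<Longrightarrow> y x \<in> supported_on (Inl ` C x)"
    by (metis bchoice)
  define f where "f = case_sum y (\<lambda>w. unit_vec (Inr w) :: 'v + 'w \<Rightarrow> 'k)"
  define S where "S = case_sum (\<lambda>x. Inl ` C x) (\<lambda>w. {Inr w :: 'v + 'w})"
  have "card (Inl ` X \<union> Inr ` W :: ('v + 'w) set) \<le> VS.dim (form_radical V W A :: ('v + 'w \<Rightarrow> 'k) set)"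
  proof (rule card_le_dim_if_disjoint_supports)
    show "finite (Inl ` X \<union> Inr ` W)" using finV \<open>finite W\<close> unfolding X_def by simp
    show "form_radical V W A \<subseteq> VS.span (unit_vec ` (Inl ` V \<union> Inr ` W))"
      by (rule form_radical_subset_span[OF finV \<open>finite W\<close>])
    show "finite (unit_vec ` (Inl ` V \<union> Inr ` W) :: ('v + 'w \<Rightarrow> 'k) set)"
      using finV \<open>finite W\<close> by simp
    show "f ` (Inl ` X \<union> Inr ` W) \<subseteq> form_radical V W A"
      using y(1) \<open>finite W\<close> by (auto simp: f_def form_radical_def supported_on_def unit_vec_def)
    show "f j \<noteq> 0" if "j \<in> Inl ` X \<union> Inr ` W" for j
      using that y(2) by (auto simp: f_def unit_vec_def fun_eq_iff)
    show "f j \<in> supported_on (S j)" if "j \<in> Inl ` X \<union> Inr ` W" for j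
      using that y(3) unfolding S_def f_def by (auto intro: unit_vec_in_supported_on)
    have CC: "C x \<inter> C x' = {}" if "x \<in> X" "x' \<in> X" "x \<noteq> x'" for x x'
      using unmatched_components_disjoint[OF s avoid M, of x x'] that unfolding C_def X_def by blast
    show "disjoint_family_on S (Inl ` X \<union> Inr ` W)"
      unfolding disjoint_family_on_def S_def by auto (use CC in blast)
  qed
  moreover have "card (Inl ` X \<union> Inr ` W :: ('v + 'w) set) = card X + card W"
    using finV \<open>finite W\<close> unfolding X_def Plus_def[symmetric] by (simp add: card_Plus)
  moreover have "card X + 2 * matching_number E = card V"
    unfolding X_def by (rule card_unmatched_vertices[OF s M])
  ultimately show ?thesis by linarith
qed

lemma card_le_dim_form_radical:
  fixes A :: "'v \<Rightarrow> 'v \<Rightarrow> 'k::field" and W :: "'w set"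
  assumes "simple_graph V E" "finite W" "alternating_on V A"
    "\<forall>a\<in>V. \<forall>b\<in>V. A a b \<noteq> 0 \<longrightarrow> {a, b} \<in> E"
  shows "card V + card W \<le> VS.dim (form_radical V W A :: ('v + 'w \<Rightarrow> 'k) set) + 2 * matching_number E"
  using assms
proof (induction "card V" arbitrary: V E rule: less_induct)
  case less
  note s = less.prems(1) and finW = less.prems(2)
  show ?case
  proof (cases "\<exists>v\<in>V. \<forall>N. maximum_matching E N \<longrightarrow> v \<in> \<Union>N")
    case True
    then obtain v where v: "v \<in> V" and cover: "\<forall>N. maximum_matching E N \<longrightarrow> v \<in> \<Union>N" by blast
    have finV: "finite V" using simple_graph_finite_vertices[OF s] .
    have "simple_graph (V - {v}) {e \<in> E. v \<notin> e}" using s unfolding simple_graph_def by blast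
    moreover have "card (V - {v}) < card V" using finV v by (rule card_Diff1_less)
    moreover have "alternating_on (V - {v}) A" using alternating_on_subset less.prems(3) by blast
    ultimately have "card (V - {v}) + card W
        \<le> VS.dim (form_radical (V - {v}) W A :: ('v + 'w \<Rightarrow> 'k) set) + 2 * matching_number {e \<in> E. v \<notin> e}"
      using less.hyps finW less.prems(4) by blast
    moreover have "card V = Suc (card (V - {v}))" using card_Suc_Diff1[OF finV v] ..
    ultimately show ?thesis
      using dim_form_radical_delete_vertex[OF finV finW v, of A]
        matching_number_delete_covered_vertex[OF s cover] by linarith
  next
    case False
    then show ?thesis
      using card_le_dim_form_radical_if_avoidable[OF less.prems] by blast
  qed
qed

section \<open>The index\<close>

definition matching_functional :: "'v set set \<Rightarrow> ('v + 'v set \<Rightarrow> 'k::field) \<Rightarrow> 'k" where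
  "matching_functional M y = (\<Sum>e\<in>M. y (Inr e))"

lemma lin_functional_matching_functional: "lin_functional S (matching_functional M)"
  unfolding lin_functional_def matching_functional_def by (simp add: sum.distrib sum_distrib_left)

lemma edge_form_matrix_matching_functional:
  fixes M :: "'v::linorder set set"
  assumes s: "simple_graph V E" and M: "matching E M"
  shows "edge_form_matrix E (\<lambda>e. matching_functional M (unit_vec (Inr e) :: 'v + 'v set \<Rightarrow> 'k)) a b
       = (if {a, b} \<in> M then if a < b then 1 else - 1 else (0::'k::field))"
proof -
  have "matching_functional M (unit_vec (Inr e) :: 'v + 'v set \<Rightarrow> 'k) = (if e \<in> M then 1 else 0)" for e
    using finite_matching[OF s M] unfolding matching_functional_def unit_vec_def by (simp add: sum.delta')
  then show ?thesis using M unfolding edge_form_matrix_def matching_def by auto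
qed

text \<open>Row \<open>a\<close> of the matrix of a matching picks out the coordinate of the partner of \<open>a\<close>.\<close>

lemma matching_matrix_kernel_iff:
  fixes A :: "'v::linorder \<Rightarrow> 'v \<Rightarrow> 'k::field"
  assumes s: "simple_graph V E" and M: "matching E M"
    and A: "\<And>a b. A a b = (if {a, b} \<in> M then if a < b then 1 else - 1 else 0)"
  shows "(\<forall>a\<in>V. (\<Sum>b\<in>V. A a b * y b) = 0) \<longleftrightarrow> (\<forall>p\<in>\<Union>M. y p = 0)"
proof
  have partner: "b = p" if "{a, p} \<in> M" "A a b \<noteq> 0" for a b p
  proof -
    have "{a, b} \<in> M" using that(2) A by (auto split: if_splits)
    then have "{a, b} = {a, p}" using disjoint_eqI[of M "{a, b}" "{a, p}" a] M that(1)
      unfolding matching_iff_disjoint by blast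
    then show ?thesis by (auto simp: doubleton_eq_iff)
  qed
  assume kernel: "\<forall>a\<in>V. (\<Sum>b\<in>V. A a b * y b) = 0"
  show "\<forall>p\<in>\<Union>M. y p = 0"
  proof
    fix p assume "p \<in> \<Union>M"
    then obtain e where e: "e \<in> M" "p \<in> e" by blast
    then have "e \<in> E" using M unfolding matching_def by blast
    then obtain a where "a \<noteq> p" "{a, p} \<in> M" "{a, p} \<subseteq> V"
      using card_two_other[OF simple_graph_card_edge[OF s] e(2)] e(1)
        simple_graph_edge_subset[OF s] by (metis insert_commute)
    moreover have "(\<Sum>b\<in>V. A a b * y b) = A a p * y p"
      using partner[OF \<open>{a, p} \<in> M\<close>] \<open>{a, p} \<subseteq> V\<close> simple_graph_finite_vertices[OF s]
      by (subst sum.remove[of V p]) (auto intro!: sum.neutral)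
    ultimately show "y p = 0" using kernel A by (auto split: if_splits)
  qed
next
  assume "\<forall>p\<in>\<Union>M. y p = 0"
  then show "\<forall>a\<in>V. (\<Sum>b\<in>V. A a b * y b) = 0"
    using A by (auto intro!: sum.neutral split: if_splits)
qed

lemma stabilizer_matching_functional:
  fixes M :: "'v::linorder set set"
  assumes s: "simple_graph V E" and M: "matching E M"
  shows "(stabilizer V E (matching_functional M) :: ('v + 'v set \<Rightarrow> 'k::field) set)
       = supported_on (Inl ` (V - \<Union>M) \<union> Inr ` E)"
proof -
  have "\<Union>M \<subseteq> V" using M simple_graph_edge_subset[OF s] unfolding matching_def by blast
  then have I: "Inl ` (V - \<Union>M) \<union> Inr ` E = (Inl ` V \<union> Inr ` E) - Inl ` \<Union>M" by blast
  have "(\<forall>a\<in>V. (\<Sum>b\<in>V. edge_form_matrix E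
      (\<lambda>e. matching_functional M (unit_vec (Inr e))) a b * y (Inl b)) = 0)
    \<longleftrightarrow> (\<forall>p\<in>\<Union>M. y (Inl p) = 0)" for y :: "'v + 'v set \<Rightarrow> 'k"
    by (rule matching_matrix_kernel_iff[OF s M edge_form_matrix_matching_functional[OF s M]])
  then show ?thesis
    unfolding stabilizer_eq_form_radical[OF s lin_functional_matching_functional] form_radical_def I
    by (auto simp: supported_on_Diff_iff)
qed

lemma graph_lie_dim_eq:
  assumes s: "simple_graph V E"
  shows "graph_lie_dim V E TYPE('k::field) = card V + card E"
  using simple_graph_finite_vertices[OF s] simple_graph_finite_edges[OF s]
  unfolding graph_lie_dim_def graph_lie_carrier_eq Plus_def[symmetric]
  by (simp add: dim_supported_on card_Plus)

lemma dim_stabilizer_lower_bound: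
  fixes l :: "('v::linorder + 'v set \<Rightarrow> 'k::field) \<Rightarrow> 'k"
  assumes s: "simple_graph V E" and l: "lin_functional (graph_lie_carrier V E) l"
  shows "card V + card E \<le> VS.dim (stabilizer V E l) + 2 * matching_number E"
  unfolding stabilizer_eq_form_radical[OF s l]
  by (rule card_le_dim_form_radical[OF s simple_graph_finite_edges[OF s]
        alternating_on_edge_form_matrix[OF s]]) (simp add: edge_form_matrix_def)

lemma dim_stabilizer_matching_functional:
  fixes M :: "'v::linorder set set"
  assumes s: "simple_graph V E" and M: "maximum_matching E M"
  shows "VS.dim (stabilizer V E (matching_functional M) :: ('v + 'v set \<Rightarrow> 'k::field) set)
       + 2 * matching_number E = card V + card E"
proof -
  have "matching E M" using M unfolding maximum_matching_def by blast
  then have "VS.dim (stabilizer V E (matching_functional M) :: ('v + 'v set \<Rightarrow> 'k) set)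
      = card (V - \<Union>M) + card E"
    unfolding stabilizer_matching_functional[OF s \<open>matching E M\<close>] Plus_def[symmetric]
    using simple_graph_finite_vertices[OF s] simple_graph_finite_edges[OF s]
    by (simp add: dim_supported_on card_Plus)
  then show ?thesis using card_unmatched_vertices[OF s M] by simp
qed

lemma lie_index_eqI:
  fixes V :: "'v::linorder set" and l0 :: "('v + 'v set \<Rightarrow> 'k::field) \<Rightarrow> 'k"
  assumes s: "simple_graph V E"
    and lower: "\<And>l. lin_functional (graph_lie_carrier V E) l
      \<Longrightarrow> n \<le> VS.dim (stabilizer V E l :: ('v + 'v set \<Rightarrow> 'k) set)"
    and witness: "lin_functional (graph_lie_carrier V E) l0" "VS.dim (stabilizer V E l0) = n"
  shows "lie_index V E TYPE('k) = n"
proof -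
  define I where "I = Inl ` V \<union> Inr ` E"
  have finI: "finite I"
    using simple_graph_finite_vertices[OF s] simple_graph_finite_edges[OF s] unfolding I_def by simp
  have bound: "VS.dim (stabilizer V E l) \<le> card (unit_vec ` I :: ('v + 'v set \<Rightarrow> 'k) set)"
    for l :: "('v + 'v set \<Rightarrow> 'k) \<Rightarrow> 'k"
  proof (rule VS.dim_le_card)
    have "stabilizer V E l \<subseteq> supported_on I"
      unfolding stabilizer_def graph_lie_carrier_eq I_def by (rule Collect_restrict)
    then show "stabilizer V E l \<subseteq> VS.span (unit_vec ` I)"
      using supported_on_subset_span[OF finI] by (rule order_trans)
  qed (use finI in simp)
  define D where "D = {VS.dim (stabilizer V E l :: ('v + 'v set \<Rightarrow> 'k) set) | l.
    lin_functional (graph_lie_carrier V E) l}"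
  have "D \<subseteq> {..card (unit_vec ` I :: ('v + 'v set \<Rightarrow> 'k) set)}"
    using bound unfolding D_def by auto
  then have "finite D" by (rule finite_subset) simp
  moreover have "n \<le> m" if "m \<in> D" for m using that lower unfolding D_def by blast
  moreover have "n \<in> D" using witness unfolding D_def by blast
  ultimately show ?thesis unfolding lie_index_def D_def[symmetric] by (rule Min_eqI)
qed

theorem proposition4p4:
  fixes V :: "'v::linorder set" and E :: "'v set set"
  assumes "simple_graph V E"
  shows "lie_index V E TYPE('k::field) = graph_lie_dim V E TYPE('k) - 2 * matching_number E
       \<and> graph_lie_dim V E TYPE('k) - 2 * matching_number E = card V + card E - 2 * matching_number E"
proof -
  obtain M where M: "maximum_matching E M" using maximum_matching_exists[OF assms] by blast
  have "lie_index V E TYPE('k) = card V + card E - 2 * matching_number E"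
  proof (rule lie_index_eqI[OF assms _ lin_functional_matching_functional])
    show "card V + card E - 2 * matching_number E \<le> VS.dim (stabilizer V E l)"
      if "lin_functional (graph_lie_carrier V E) l" for l :: "('v + 'v set \<Rightarrow> 'k) \<Rightarrow> 'k"
      using dim_stabilizer_lower_bound[OF assms that] by linarith
    show "VS.dim (stabilizer V E (matching_functional M) :: ('v + 'v set \<Rightarrow> 'k) set)
        = card V + card E - 2 * matching_number E"
      using dim_stabilizer_matching_functional[OF assms M, where 'k = 'k] by linarith
  qed
  then show ?thesis using graph_lie_dim_eq[OF assms, where 'k = 'k] by simp
qed

end
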